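(* Let $\mathcal{X}\times\mathcal{Y}$ be a sample space, $\mathcal{H}$ a set of hypotheses $h:\mathcal{X}\to\mathcal{Y}$, $n\in\mathbb{N}$, and let $\mathcal{A}$ be a (possibly randomized) learning algorithm, i.e. a Markov kernel $\mathcal{P}_{H|S}$ from $(\mathcal{X}\times\mathcal{Y})^n$ to $\mathcal{H}$. Let $S\sim\mathcal{P}^n$ for some distribution $\mathcal{P}$ on $\mathcal{X}\times\mathcal{Y}$, let $H=\mathcal{A}(S)$, and assume the joint law $\mathcal{P}_{SH}$ satisfies $\mathcal{P}_{SH}\ll\mathcal{P}_S\mathcal{P}_H$. Let $\ell$ be the $0$-$1$ loss. Given $\eta\in(0,1)$, let $E=\{(s,h):|L_{\mathcal{P}}(h)-L_s(h)|>\eta\}$. Then for every $\alpha>1$, $$\mathbb{P}((S,\mathcal{A}(S))\in E)\le\exp\left(\frac{\alpha-1}{\alpha}\left(I_\alpha(S;\mathcal{A}(S))+\log 2-2n\eta^2\right)\right).$$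
   Context: The $0$-$1$ loss is $\ell(h,(x,y))=\mathbb{1}_{h(x)\neq y}$. The population risk is $L_{\mathcal{P}}(h)=\mathbb{E}_{(x,y)\sim\mathcal{P}}[\ell(h,(x,y))]=\mathcal{P}(\{(x,y):h(x)\ne y\})$, and for $s=((x_1,y_1),\dots,(x_n,y_n))$ the empirical risk is $L_s(h)=\frac1n\sum_{i=1}^n\ell(h,(x_i,y_i))$. Sibson's $\alpha$-mutual information is $I_\alpha(S;H)=\min_{Q_H}D_\alpha(\mathcal{P}_{SH}\|\mathcal{P}_SQ_H)$, where $D_\alpha(\mathcal{P}\|\mathcal{Q})=\frac{1}{\alpha-1}\ln\int p^\alpha q^{1-\alpha}d\mu$ is the Rényi divergence. Logarithms are natural. Measurability of all relevant sets and maps is assumed. *)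

theory Defs
  imports "HOL-Probability.Probability"
begin

definition pop_risk :: "('x \<times> 'y) measure \<Rightarrow> ('x \<Rightarrow> 'y) \<Rightarrow> real" where
  "pop_risk P h = measure P {z \<in> space P. h (fst z) \<noteq> snd z}"

definition emp_risk :: "nat \<Rightarrow> (nat \<Rightarrow> 'x \<times> 'y) \<Rightarrow> ('x \<Rightarrow> 'y) \<Rightarrow> real" where
  "emp_risk n s h = (\<Sum>i<n. (if h (fst (s i)) \<noteq> snd (s i) then 1 else 0)) / real n"

text \<open>Renyi divergence of order alpha > 1, D_alpha(M || N):
  (1/(alpha-1)) ln of the integral of (dM/dN)^alpha dN if M is absolutely continuous
  w.r.t. N, and +infinity otherwise (this agrees with the formula
  (1/(alpha-1)) ln of the integral of p^alpha q^(1-alpha) for alpha > 1).\<close>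
definition renyi_div :: "real \<Rightarrow> 'a measure \<Rightarrow> 'a measure \<Rightarrow> ereal" where
  "renyi_div \<alpha> M N =
     (if absolutely_continuous N M then
        (let J = (\<integral>\<^sup>+ x. ennreal (enn2real (RN_deriv N M x) powr \<alpha>) \<partial>N)
         in if J = \<infinity> then \<infinity> else ereal (ln (enn2real J) / (\<alpha> - 1)))
      else \<infinity>)"

definition sibson_mi :: "real \<Rightarrow> 's measure \<Rightarrow> 'h measure \<Rightarrow> ('s \<times> 'h) measure \<Rightarrow> ereal" where
  "sibson_mi \<alpha> PS Hm PSH =
     (INF Q \<in> {Q. prob_space Q \<and> sets Q = sets Hm}. renyi_div \<alpha> PSH (PS \<Otimes>\<^sub>M Q))"

end

theory Submission
  imports Defs
begin

text \<open>
  For a fixed hypothesis h the section of E at h is a two-sided Hoeffding deviation event for the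
  n i.i.d. losses, so (P_S \<times> Q_H)(E) \<le> 2 exp(-2 n \<eta>^2) for every probability measure Q_H.
  Hoelder's inequality (via Young's inequality) moves this bound to the joint law:
  P_SH(E) \<le> J^(1/\<alpha>) (P_S \<times> Q_H)(E)^((\<alpha>-1)/\<alpha>), where
  J = \<integral> (dP_SH / d(P_S \<times> Q_H))^\<alpha> = exp((\<alpha>-1) D_\<alpha>(P_SH \<parallel> P_S \<times> Q_H)).
  Taking logarithms and the infimum over Q_H turns this into the bound via I_\<alpha>(S;H).
\<close>

lemma Youngs_inequality_scaled:
  fixes p q a b A B :: real
  assumes "1 < p" "1 < q" "1/p + 1/q = 1" "0 \<le> a" "0 \<le> b" "0 < A" "0 < B"
  shows "a * b \<le> A * B * ((a / A) powr p / p + (b / B) powr q / q)"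
proof -
  have "(a / A) * (b / B) \<le> (a / A) powr p / p + (b / B) powr q / q"
    by (rule Youngs_inequality) (use assms in auto)
  then have "A * B * ((a / A) * (b / B)) \<le> A * B * ((a / A) powr p / p + (b / B) powr q / q)"
    using assms by (intro mult_left_mono) auto
  then show ?thesis
    using assms by (simp add: field_simps)
qed

lemma Youngs_inequality_indicator:
  fixes \<alpha> J \<nu> t :: real
  assumes \<alpha>: "1 < \<alpha>" and "0 < J" "0 < \<nu>" "0 \<le> t"
  defines "C \<equiv> J powr (1/\<alpha>) * \<nu> powr ((\<alpha> - 1)/\<alpha>)"
  shows "t * indicator E x \<le> C / (\<alpha> * J) * t powr \<alpha> + C * (\<alpha> - 1) / (\<alpha> * \<nu>) * indicator E x"
proof -
  define q where "q = \<alpha> / (\<alpha> - 1)"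
  have q: "1 < q" "1/\<alpha> + 1/q = 1"
    using \<alpha> by (auto simp: q_def field_simps)
  have "t * indicator E x \<le> J powr (1/\<alpha>) * \<nu> powr (1/q)
          * ((t / J powr (1/\<alpha>)) powr \<alpha> / \<alpha> + (indicator E x / \<nu> powr (1/q)) powr q / q)"
    by (rule Youngs_inequality_scaled) (use assms q in auto)
  also have "(t / J powr (1/\<alpha>)) powr \<alpha> = t powr \<alpha> / J"
    using assms by (simp add: powr_divide powr_powr)
  also have "(indicator E x / \<nu> powr (1/q)) powr q = indicator E x / \<nu>"
    using assms q by (simp add: powr_divide powr_powr indicator_def)
  finally show ?thesis
    using \<alpha> by (simp add: C_def q_def field_simps)
qed

lemma measure_le_RN_deriv_powr_integral_pos:
  fixes M N :: "'a measure" and \<alpha> Jr :: real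
  assumes "finite_measure N" "finite_measure M"
    and ac: "absolutely_continuous N M" and sets_eq: "sets M = sets N"
    and \<alpha>: "1 < \<alpha>" and E: "E \<in> sets N"
    and J: "(\<integral>\<^sup>+ x. ennreal (enn2real (RN_deriv N M x) powr \<alpha>) \<partial>N) = ennreal Jr"
    and Jr: "0 < Jr" and \<nu>: "0 < measure N E"
  shows "measure M E \<le> Jr powr (1/\<alpha>) * measure N E powr ((\<alpha> - 1)/\<alpha>)"
proof -
  interpret N: finite_measure N by fact
  interpret M: finite_measure M by fact
  define f where "f = RN_deriv N M"
  define \<nu> where "\<nu> = measure N E"
  define C where "C = Jr powr (1/\<alpha>) * \<nu> powr ((\<alpha> - 1)/\<alpha>)"
  define c\<^sub>1 c\<^sub>2 where "c\<^sub>1 = C / (\<alpha> * Jr)" and "c\<^sub>2 = C * (\<alpha> - 1) / (\<alpha> * \<nu>)"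
  have c: "0 \<le> c\<^sub>1" "0 \<le> c\<^sub>2"
    using \<alpha> Jr \<nu> by (auto simp: c\<^sub>1_def c\<^sub>2_def C_def \<nu>_def)
  have [measurable]: "f \<in> borel_measurable N"
    by (simp add: f_def)
  have "emeasure M E = (\<integral>\<^sup>+ x. f x * indicator E x \<partial>N)"
    using E unfolding f_def
    by (subst N.density_RN_deriv[OF ac sets_eq, symmetric]) (simp add: emeasure_density)
  also have "\<dots> \<le> (\<integral>\<^sup>+ x. ennreal c\<^sub>1 * ennreal (enn2real (f x) powr \<alpha>)
                          + ennreal c\<^sub>2 * indicator E x \<partial>N)"
  proof (rule nn_integral_mono_AE)
    have "AE x in N. f x \<noteq> \<infinity>"
      unfolding f_def
      by (rule N.RN_deriv_finite[OF _ ac sets_eq]) (simp add: M.sigma_finite_measure_axioms)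
    then show "AE x in N. f x * indicator E x
                 \<le> ennreal c\<^sub>1 * ennreal (enn2real (f x) powr \<alpha>) + ennreal c\<^sub>2 * indicator E x"
    proof eventually_elim
      case (elim x)
      then have "f x * indicator E x = ennreal (enn2real (f x) * indicator E x)"
        by (simp add: ennreal_enn2real_if indicator_def)
      also have "\<dots> \<le> ennreal (c\<^sub>1 * enn2real (f x) powr \<alpha> + c\<^sub>2 * indicator E x)"
        using Youngs_inequality_indicator[OF \<alpha> Jr \<nu>[folded \<nu>_def], of "enn2real (f x)" E x]
        by (intro ennreal_leI) (simp add: c\<^sub>1_def c\<^sub>2_def C_def)
      also have "\<dots> = ennreal c\<^sub>1 * ennreal (enn2real (f x) powr \<alpha>) + ennreal c\<^sub>2 * indicator E x"
        using c by (simp add: ennreal_plus ennreal_mult split: split_indicator)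
      finally show ?case .
    qed
  qed
  also have "\<dots> = ennreal c\<^sub>1 * ennreal Jr + ennreal c\<^sub>2 * ennreal \<nu>"
    using E J by (simp add: nn_integral_add nn_integral_cmult f_def \<nu>_def N.emeasure_eq_measure)
  also have "\<dots> = ennreal (c\<^sub>1 * Jr + c\<^sub>2 * \<nu>)"
    using c Jr \<nu> by (simp add: \<nu>_def ennreal_plus ennreal_mult)
  also have "c\<^sub>1 * Jr + c\<^sub>2 * \<nu> = C"
    using Jr \<nu> \<alpha> unfolding \<nu>_def[symmetric] by (simp add: c\<^sub>1_def c\<^sub>2_def field_simps)
  finally show ?thesis
    using Jr \<nu> by (simp add: M.emeasure_eq_measure C_def \<nu>_def)
qed

lemma emeasure_eq_0_if_RN_deriv_powr_integral_eq_0: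
  assumes "finite_measure N" "sigma_finite_measure M"
    and ac: "absolutely_continuous N M" and sets_eq: "sets M = sets N"
    and J: "(\<integral>\<^sup>+ x. ennreal (enn2real (RN_deriv N M x) powr \<alpha>) \<partial>N) = 0"
    and A: "A \<in> sets M"
  shows "emeasure M A = 0"
proof -
  interpret N: finite_measure N by fact
  have "AE x in N. ennreal (enn2real (RN_deriv N M x) powr \<alpha>) = 0"
    using J by (subst (asm) nn_integral_0_iff_AE) auto
  moreover have "AE x in N. RN_deriv N M x \<noteq> \<infinity>"
    by (rule N.RN_deriv_finite) (use assms in auto)
  ultimately have "AE x in N. RN_deriv N M x * indicator A x = 0"
    by eventually_elim (auto simp: enn2real_eq_0_iff)
  then have "(\<integral>\<^sup>+ x. RN_deriv N M x * indicator A x \<partial>N) = 0"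
    using A sets_eq by (subst nn_integral_0_iff_AE) auto
  moreover have "emeasure M A = (\<integral>\<^sup>+ x. RN_deriv N M x * indicator A x \<partial>N)"
    using A sets_eq
    by (subst N.density_RN_deriv[OF ac sets_eq, symmetric]) (simp add: emeasure_density)
  ultimately show ?thesis
    by simp
qed

lemma measure_le_RN_deriv_powr_integral:
  fixes M N :: "'a measure" and \<alpha> Jr :: real
  assumes N: "finite_measure N" and M: "finite_measure M"
    and ac: "absolutely_continuous N M" and sets_eq: "sets M = sets N"
    and \<alpha>: "1 < \<alpha>" and E: "E \<in> sets N"
    and J: "(\<integral>\<^sup>+ x. ennreal (enn2real (RN_deriv N M x) powr \<alpha>) \<partial>N) = ennreal Jr"
    and "0 \<le> Jr"
  shows "measure M E \<le> Jr powr (1/\<alpha>) * measure N E powr ((\<alpha> - 1)/\<alpha>)"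
proof (cases "0 < Jr \<and> 0 < measure N E")
  case True
  then show ?thesis
    using measure_le_RN_deriv_powr_integral_pos[OF N M ac sets_eq \<alpha> E J] by simp
next
  case False
  interpret N: finite_measure N by fact
  interpret M: finite_measure M by fact
  have "emeasure M E = 0"
  proof (cases "Jr = 0")
    case True
    then show ?thesis
      using emeasure_eq_0_if_RN_deriv_powr_integral_eq_0[OF N _ ac sets_eq] J E sets_eq
      by (simp add: M.sigma_finite_measure_axioms)
  next
    case False
    with \<open>\<not> (0 < Jr \<and> 0 < measure N E)\<close> \<open>0 \<le> Jr\<close> have "E \<in> null_sets N"
      using E by (simp add: N.emeasure_eq_measure null_sets_def less_le)
    then show ?thesis
      using ac unfolding absolutely_continuous_def by auto
  qed
  then show ?thesis
    by (simp add: M.emeasure_eq_measure)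
qed

lemma renyi_div_ge_ln_measure:
  fixes M N :: "'a measure" and \<alpha> \<delta> :: real
  assumes "finite_measure M" "finite_measure N" and sets_eq: "sets M = sets N"
    and \<alpha>: "1 < \<alpha>" and E: "E \<in> sets N"
    and ME: "0 < measure M E" and NE: "measure N E \<le> \<delta>"
  shows "ereal (\<alpha> / (\<alpha> - 1) * ln (measure M E) - ln \<delta>) \<le> renyi_div \<alpha> M N"
proof -
  define J where "J = (\<integral>\<^sup>+ x. ennreal (enn2real (RN_deriv N M x) powr \<alpha>) \<partial>N)"
  show ?thesis
  proof (cases "absolutely_continuous N M \<and> J \<noteq> \<infinity>")
    case False
    then show ?thesis
      unfolding renyi_div_def J_def by (auto simp: Let_def)
  next
    case True
    define Jr where "Jr = enn2real J"
    have renyi: "renyi_div \<alpha> M N = ereal (ln Jr / (\<alpha> - 1))"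
      using True unfolding renyi_div_def J_def[symmetric] Jr_def by (simp add: Let_def)
    have "measure M E \<le> Jr powr (1/\<alpha>) * measure N E powr ((\<alpha> - 1)/\<alpha>)"
      using True assms
      by (intro measure_le_RN_deriv_powr_integral) (auto simp: Jr_def J_def ennreal_enn2real_if)
    also have "\<dots> \<le> Jr powr (1/\<alpha>) * \<delta> powr ((\<alpha> - 1)/\<alpha>)"
      using NE \<alpha> by (intro mult_left_mono powr_mono2) auto
    finally have bound: "measure M E \<le> Jr powr (1/\<alpha>) * \<delta> powr ((\<alpha> - 1)/\<alpha>)" .
    with ME have "Jr \<noteq> 0" "\<delta> \<noteq> 0"
      by auto
    moreover have "0 \<le> \<delta>"
      using NE measure_nonneg[of N E] by linarith
    ultimately have "0 < Jr" "0 < \<delta>"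
      by (auto simp: Jr_def less_le)
    then have "ln (measure M E) \<le> ln Jr / \<alpha> + (\<alpha> - 1) / \<alpha> * ln \<delta>"
      using bound ME by (simp add: ln_mult flip: ln_le_cancel_iff)
    then have "\<alpha> / (\<alpha> - 1) * ln (measure M E) \<le> \<alpha> / (\<alpha> - 1) * (ln Jr / \<alpha> + (\<alpha> - 1) / \<alpha> * ln \<delta>)"
      using \<alpha> by (intro mult_left_mono) auto
    also have "\<dots> = ln Jr / (\<alpha> - 1) + ln \<delta>"
      using \<alpha> by (simp add: field_simps)
    finally show ?thesis
      by (simp add: renyi)
  qed
qed

lemma emeasure_pair_measure_le_sections:
  assumes "sigma_finite_measure M" "prob_space Q" "E \<in> sets (M \<Otimes>\<^sub>M Q)"
    and sections: "\<And>y. y \<in> space Q \<Longrightarrow> emeasure M ((\<lambda>x. (x, y)) -` E) \<le> c"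
  shows "emeasure (M \<Otimes>\<^sub>M Q) E \<le> c"
proof -
  interpret Q: prob_space Q by fact
  interpret MQ: pair_sigma_finite M Q
    by (intro pair_sigma_finite.intro assms Q.sigma_finite_measure_axioms)
  have "emeasure (M \<Otimes>\<^sub>M Q) E = (\<integral>\<^sup>+ y. emeasure M ((\<lambda>x. (x, y)) -` E) \<partial>Q)"
    by (rule MQ.emeasure_pair_measure_alt2) fact
  also have "\<dots> \<le> (\<integral>\<^sup>+ y. c \<partial>Q)"
    by (intro nn_integral_mono sections)
  also have "\<dots> = c"
    by (simp add: Q.emeasure_space_1)
  finally show ?thesis .
qed

lemma measure_le_exp_sibson_mi:
  fixes PS :: "'s measure" and Hm :: "'h measure" and PSH :: "('s \<times> 'h) measure"
  assumes "prob_space PS" "finite_measure PSH" and sets_PSH: "sets PSH = sets (PS \<Otimes>\<^sub>M Hm)"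
    and E: "E \<in> sets (PS \<Otimes>\<^sub>M Hm)" and \<alpha>: "1 < \<alpha>" and "0 \<le> \<delta>"
    and sections: "\<And>h. h \<in> space Hm \<Longrightarrow> emeasure PS ((\<lambda>s. (s, h)) -` E) \<le> ennreal \<delta>"
    and I: "sibson_mi \<alpha> PS Hm PSH = ereal I"
  shows "measure PSH E \<le> exp ((\<alpha> - 1) / \<alpha> * (I + ln \<delta>))"
proof (cases "measure PSH E = 0")
  case False
  interpret PS: prob_space PS by fact
  have ME: "0 < measure PSH E"
    using False measure_nonneg[of PSH E] by linarith
  define c where "c = \<alpha> / (\<alpha> - 1) * ln (measure PSH E) - ln \<delta>"
  have "ereal c \<le> renyi_div \<alpha> PSH (PS \<Otimes>\<^sub>M Q)" if Q: "prob_space Q" "sets Q = sets Hm" for Q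
  proof -
    interpret Q: prob_space Q by fact
    interpret PSQ: pair_prob_space PS Q ..
    have sets_PSQ: "sets (PS \<Otimes>\<^sub>M Q) = sets (PS \<Otimes>\<^sub>M Hm)"
      using Q by (intro sets_pair_measure_cong) auto
    have "emeasure (PS \<Otimes>\<^sub>M Q) E \<le> ennreal \<delta>"
      using Q(1) E sets_PSQ sections sets_eq_imp_space_eq[OF Q(2)]
      by (intro emeasure_pair_measure_le_sections) (auto simp: PS.sigma_finite_measure_axioms)
    then have NE: "measure (PS \<Otimes>\<^sub>M Q) E \<le> \<delta>"
      using \<open>0 \<le> \<delta>\<close> by (simp add: PSQ.emeasure_eq_measure)
    have "sets PSH = sets (PS \<Otimes>\<^sub>M Q)"
      using sets_PSH sets_PSQ by simp
    moreover have "E \<in> sets (PS \<Otimes>\<^sub>M Q)"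
      using E sets_PSQ by simp
    ultimately show ?thesis
      unfolding c_def
      by (rule renyi_div_ge_ln_measure[OF \<open>finite_measure PSH\<close> PSQ.finite_measure_axioms
            _ \<alpha> _ ME NE])
  qed
  then have "ereal c \<le> sibson_mi \<alpha> PS Hm PSH"
    unfolding sibson_mi_def by (auto intro: INF_greatest)
  then have "\<alpha> / (\<alpha> - 1) * ln (measure PSH E) \<le> I + ln \<delta>"
    using I by (simp add: c_def)
  then have "(\<alpha> - 1) / \<alpha> * (\<alpha> / (\<alpha> - 1) * ln (measure PSH E)) \<le> (\<alpha> - 1) / \<alpha> * (I + ln \<delta>)"
    using \<alpha> by (intro mult_left_mono) auto
  moreover have "(\<alpha> - 1) / \<alpha> * (\<alpha> / (\<alpha> - 1) * ln (measure PSH E)) = ln (measure PSH E)"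
    using \<alpha> by simp
  ultimately have "ln (measure PSH E) \<le> (\<alpha> - 1) / \<alpha> * (I + ln \<delta>)"
    by simp
  then show ?thesis
    using ME by (subst ln_le_cancel_iff[symmetric]) auto
qed simp

lemma indep_vars_PiM_coordinates:
  assumes M: "\<And>i. i \<in> I \<Longrightarrow> prob_space (M i)"
  shows "prob_space.indep_vars (PiM I M) M (\<lambda>i x. x i) I"
proof -
  interpret prob_space "PiM I M"
    by (rule prob_space_PiM) (use M in auto)
  show ?thesis
  proof (cases "I = {}")
    case True
    then show ?thesis
      unfolding indep_vars_def indep_sets_def by auto
  next
    case False
    have "distr (PiM I M) (PiM I M) (\<lambda>x. \<lambda>i\<in>I. x i) = distr (PiM I M) (PiM I M) (\<lambda>x. x)"
      by (intro distr_cong) (auto simp: space_PiM PiE_def extensional_restrict)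
    also have "\<dots> = PiM I (\<lambda>i. distr (PiM I M) (M i) (\<lambda>x. x i))"
      using M by (auto simp: distr_PiM_component intro!: PiM_cong)
    finally show ?thesis
      using False by (subst indep_vars_iff_distr_eq_PiM') auto
  qed
qed

lemma emeasure_empirical_frequency_deviation_le:
  fixes P :: "'a measure" and L :: "'a set" and n :: nat and \<eta> :: real
  assumes P: "prob_space P" and L: "L \<in> sets P" and \<eta>: "0 < \<eta>"
  defines "PS \<equiv> PiM {..<n} (\<lambda>_. P)"
  shows "emeasure PS {s \<in> space PS. \<eta> < \<bar>measure P L - (\<Sum>i<n. indicator L (s i)) / real n\<bar>}
           \<le> ennreal (2 * exp (- 2 * real n * \<eta>\<^sup>2))"
proof (cases "n = 0")
  case True
  interpret PS: prob_space PS
    unfolding PS_def by (rule prob_space_PiM) (rule P)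
  have "emeasure PS {s \<in> space PS. \<eta> < \<bar>measure P L - (\<Sum>i<n. indicator L (s i)) / real n\<bar>} \<le> 1"
    by (rule PS.emeasure_le_1)
  also have "1 \<le> ennreal (2 * exp (- 2 * real n * \<eta>\<^sup>2))"
    using True by simp
  finally show ?thesis .
next
  case False
  interpret PS: prob_space PS
    unfolding PS_def by (rule prob_space_PiM) (rule P)
  define X where "X = (\<lambda>i (s :: nat \<Rightarrow> 'a). indicator L (s i) :: real)"
  have [measurable]: "X i \<in> borel_measurable PS" if "i < n" for i
    unfolding X_def PS_def using that L by simp
  have distr_X: "distr PS borel (X i) = distr P borel (indicator L)" if "i < n" for i
  proof -
    have "distr PS borel (X i) = distr (distr PS P (\<lambda>s. s i)) borel (indicator L)"
      using that L by (subst distr_distr) (auto simp: X_def PS_def comp_def)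
    then show ?thesis
      using that P distr_PiM_component[of "{..<n}" "\<lambda>_. P" i] by (simp add: PS_def)
  qed
  have "PS.expectation (X 0) = integral\<^sup>L (distr PS borel (X 0)) (\<lambda>x. x)"
    using False by (intro integral_distr[symmetric]) auto
  also have "\<dots> = measure P L"
    using False L by (simp add: distr_X integral_distr)
  finally have expectation: "PS.expectation (X 0) = measure P L" .
  interpret Hoeffding_ineq_iid PS "{..<n}" X "X 0" 0 1 "PS.expectation (X 0)"
  proof unfold_locales
    show "PS.indep_vars (\<lambda>_. borel) X {..<n}"
      unfolding X_def PS_def using L
      by (intro prob_space.indep_vars_compose2[OF _ indep_vars_PiM_coordinates])
        (auto intro: P prob_space_PiM)
    show "X 0 \<in> borel_measurable PS"
      using False by simp
  qed (use False distr_X in \<open>auto simp: X_def\<close>)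
  define D where "D = {s \<in> space PS. \<eta> \<le> \<bar>(\<Sum>i<n. X i s) / real n - measure P L\<bar>}"
  have "{s \<in> space PS. \<eta> < \<bar>measure P L - (\<Sum>i<n. indicator L (s i)) / real n\<bar>} \<subseteq> D"
    unfolding D_def X_def by (auto simp: abs_minus_commute[of "measure P L"])
  then have "emeasure PS {s \<in> space PS. \<eta> < \<bar>measure P L - (\<Sum>i<n. indicator L (s i)) / real n\<bar>}
               \<le> emeasure PS D"
    by (rule emeasure_mono) (unfold D_def, measurable)
  also have "\<dots> = ennreal (PS.prob D)"
    by (simp add: PS.emeasure_eq_measure)
  also have "\<dots> \<le> ennreal (2 * exp (- 2 * real n * \<eta>\<^sup>2))"
    using Hoeffding_ineq_abs_ge'[of \<eta>] \<eta> False
    by (intro ennreal_leI) (simp add: D_def expectation lessThan_empty_iff)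
  finally show ?thesis .
qed

lemma emeasure_risk_deviation_le:
  fixes P :: "('x \<times> 'y) measure" and h :: "'x \<Rightarrow> 'y" and n :: nat and \<eta> :: real
  assumes "prob_space P" and loss: "{z \<in> space P. h (fst z) \<noteq> snd z} \<in> sets P" and "0 < \<eta>"
  defines "PS \<equiv> PiM {..<n} (\<lambda>_. P)"
  shows "emeasure PS {s \<in> space PS. \<eta> < \<bar>pop_risk P h - emp_risk n s h\<bar>}
           \<le> ennreal (2 * exp (- 2 * real n * \<eta>\<^sup>2))"
proof -
  define L where "L = {z \<in> space P. h (fst z) \<noteq> snd z}"
  have "emp_risk n s h = (\<Sum>i<n. indicator L (s i)) / real n" if "s \<in> space PS" for s
    using that unfolding emp_risk_def L_def PS_def
    by (intro arg_cong2[where f="(/)"] sum.cong) (auto simp: space_PiM indicator_def)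
  then have "{s \<in> space PS. \<eta> < \<bar>pop_risk P h - emp_risk n s h\<bar>}
           = {s \<in> space PS. \<eta> < \<bar>measure P L - (\<Sum>i<n. indicator L (s i)) / real n\<bar>}"
    by (auto simp: pop_risk_def L_def)
  then show ?thesis
    unfolding PS_def using emeasure_empirical_frequency_deviation_le assms(1,3) loss
    by (simp add: L_def)
qed

lemma misclassification_set_in_sets:
  assumes "{(h, z) \<in> space (Hm \<Otimes>\<^sub>M Z). h (fst z) \<noteq> snd z} \<in> sets (Hm \<Otimes>\<^sub>M Z)"
    and sets_P: "sets P = sets Z" and h: "h \<in> space Hm"
  shows "{z \<in> space P. h (fst z) \<noteq> snd z} \<in> sets P"
proof -
  have "Pair h -` {(h, z) \<in> space (Hm \<Otimes>\<^sub>M Z). h (fst z) \<noteq> snd z} = {z \<in> space P. h (fst z) \<noteq> snd z}"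
    using h sets_eq_imp_space_eq[OF sets_P] by (auto simp: space_pair_measure)
  then show ?thesis
    using sets_Pair1[OF assms(1), of h] sets_P by simp
qed

lemma measurable_distr_Pair_prob_algebra:
  assumes K: "K \<in> M \<rightarrow>\<^sub>M prob_algebra N"
  shows "(\<lambda>s. distr (K s) (M \<Otimes>\<^sub>M N) (\<lambda>h. (s, h))) \<in> M \<rightarrow>\<^sub>M prob_algebra (M \<Otimes>\<^sub>M N)"
proof (rule measurable_prob_algebraI)
  fix s assume s: "s \<in> space M"
  have "prob_space (K s)" and sets_K: "sets (K s) = sets N"
    using measurable_space[OF K s] by (auto simp: space_prob_algebra)
  moreover have "(\<lambda>h. (s, h)) \<in> K s \<rightarrow>\<^sub>M M \<Otimes>\<^sub>M N"
    using s sets_K by (simp cong: measurable_cong_sets)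
  ultimately show "prob_space (distr (K s) (M \<Otimes>\<^sub>M N) (\<lambda>h. (s, h)))"
    by (intro prob_space.prob_space_distr)
next
  show "(\<lambda>s. distr (K s) (M \<Otimes>\<^sub>M N) (\<lambda>h. (s, h))) \<in> M \<rightarrow>\<^sub>M subprob_algebra (M \<Otimes>\<^sub>M N)"
    by (rule measurable_distr2[where M=N]) (auto intro: measurable_prob_algebraD[OF K])
qed

theorem corollary4:
  fixes X :: "'x measure" and Y :: "'y measure"
    and Hm :: "('x \<Rightarrow> 'y) measure"
    and n :: nat
    and P :: "('x \<times> 'y) measure"
    and K :: "(nat \<Rightarrow> 'x \<times> 'y) \<Rightarrow> ('x \<Rightarrow> 'y) measure"
    and \<eta> \<alpha> :: real
  defines "PS \<equiv> PiM {..<n} (\<lambda>_. P)"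
  defines "PSH \<equiv> PS \<bind> (\<lambda>s. distr (K s) (PS \<Otimes>\<^sub>M Hm) (\<lambda>h. (s, h)))"
  defines "PH \<equiv> PS \<bind> K"
  defines "E \<equiv> {(s, h) \<in> space (PS \<Otimes>\<^sub>M Hm). \<bar>pop_risk P h - emp_risk n s h\<bar> > \<eta>}"
  assumes hyp_meas: "\<And>h. h \<in> space Hm \<Longrightarrow> h \<in> X \<rightarrow>\<^sub>M Y"
    and loss_meas: "{(h, z) \<in> space (Hm \<Otimes>\<^sub>M (X \<Otimes>\<^sub>M Y)). h (fst z) \<noteq> snd z}
                      \<in> sets (Hm \<Otimes>\<^sub>M (X \<Otimes>\<^sub>M Y))"
    and P_prob: "prob_space P"
    and P_sets: "sets P = sets (X \<Otimes>\<^sub>M Y)"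
    and K_kernel: "K \<in> PS \<rightarrow>\<^sub>M prob_algebra Hm"
    and abs_cont: "absolutely_continuous (PS \<Otimes>\<^sub>M PH) PSH"
    and eta: "0 < \<eta>" "\<eta> < 1"
    and alpha: "1 < \<alpha>"
  shows "\<forall>I. sibson_mi \<alpha> PS Hm PSH = ereal I \<longrightarrow>
           measure PSH E \<le> exp ((\<alpha> - 1) / \<alpha> * (I + ln 2 - 2 * real n * \<eta>\<^sup>2))"
proof (intro allI impI)
  fix I assume I: "sibson_mi \<alpha> PS Hm PSH = ereal I"
  have PS: "PS \<in> space (prob_algebra PS)"
    unfolding PS_def by (simp add: space_prob_algebra prob_space_PiM P_prob)
  note kernel = measurable_distr_Pair_prob_algebra[OF K_kernel]
  have PSH: "prob_space PSH" "sets PSH = sets (PS \<Otimes>\<^sub>M Hm)"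
    unfolding PSH_def by (rule prob_space_bind'[OF PS kernel], rule sets_bind'[OF PS kernel])
  show "measure PSH E \<le> exp ((\<alpha> - 1) / \<alpha> * (I + ln 2 - 2 * real n * \<eta>\<^sup>2))"
  proof (cases "E \<in> sets (PS \<Otimes>\<^sub>M Hm)")
    case True
    have "emeasure PS ((\<lambda>s. (s, h)) -` E) \<le> ennreal (2 * exp (- 2 * real n * \<eta>\<^sup>2))"
      if h: "h \<in> space Hm" for h
    proof -
      have "(\<lambda>s. (s, h)) -` E = {s \<in> space PS. \<eta> < \<bar>pop_risk P h - emp_risk n s h\<bar>}"
        using h unfolding E_def by (auto simp: space_pair_measure)
      then show ?thesis
        unfolding PS_def
        using emeasure_risk_deviation_le P_prob eta(1)
          misclassification_set_in_sets[OF loss_meas P_sets h]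
        by simp
    qed
    then have "measure PSH E \<le> exp ((\<alpha> - 1) / \<alpha> * (I + ln (2 * exp (- 2 * real n * \<eta>\<^sup>2))))"
      using PS PSH True alpha I
      by (intro measure_le_exp_sibson_mi) (auto simp: space_prob_algebra prob_space.finite_measure)
    then show ?thesis
      by (simp add: ln_mult algebra_simps)
  qed (simp add: measure_notin_sets PSH)
qed

end
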